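(* Let $f_{SN_3}(x)=\sqrt{\frac{x^2+1}{2}}-\frac{x+\sqrt x+1}{3}$ for $x\in(0,\infty)$, let $f_{SN_3}^*(u)=u\,f_{SN_3}\!\left(\frac{1-u}{u}\right)$ for $u\in(0,1)$, extended by continuity to $[0,1]$ (explicitly $f_{SN_3}^*(u)=\frac{\sqrt2}{2}\sqrt{u^2+(1-u)^2}-\frac13\left(1+\sqrt{u(1-u)}\right)$), and define $\overline M_{SN_3}(C_1,C_2)=E_X\{f_{SN_3}^*(P(C_2\mid x))\}$. Then $$P_e\le \frac12\left[1-\frac{6}{3\sqrt2-2}\,\overline M_{SN_3}(C_1,C_2)\right].$$
   Context: Two-class decision problem: classes $C_1,C_2$, an observation $x$ in a space $\mathrm X$ with density $p(x)$, and a posteriori probabilities $P(C_1\mid x),P(C_2\mid x)\ge0$ with $P(C_1\mid x)+P(C_2\mid x)=1$. $E_X\{g(x)\}=\int_{\mathrm X} g(x)p(x)\,dx$. $P_e=E_X\{\min(P(C_1\mid x),P(C_2\mid x))\}$ is the Bayesian probability of error. *)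

theory Defs
  imports "HOL-Probability.Probability"
begin

definition f_SN3 :: "real \<Rightarrow> real" where
  "f_SN3 x = sqrt ((x\<^sup>2 + 1) / 2) - (x + sqrt x + 1) / 3"

definition f_SN3_star :: "real \<Rightarrow> real" where
  "f_SN3_star u =
     (if 0 < u \<and> u < 1 then u * f_SN3 ((1 - u) / u)
      else sqrt 2 / 2 * sqrt (u\<^sup>2 + (1 - u)\<^sup>2) - (1 + sqrt (u * (1 - u))) / 3)"

text \<open>Bayesian probability of error and the measure M_SN3, where M is the distribution
  of the observation x (density p) and q x = P(C2|x), so P(C1|x) = 1 - q x.\<close>
definition bayes_error :: "'a measure \<Rightarrow> ('a \<Rightarrow> real) \<Rightarrow> real" where
  "bayes_error M q = (\<integral>x. min (1 - q x) (q x) \<partial>M)"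

definition M_SN3 :: "'a measure \<Rightarrow> ('a \<Rightarrow> real) \<Rightarrow> real" where
  "M_SN3 M q = (\<integral>x. f_SN3_star (q x) \<partial>M)"

end

theory Submission
  imports Defs
begin

text \<open>With t = |1 - 2u| the distance of the posterior from 1/2, min (u, 1 - u) is
  (1 - t)/2, while 6 f*(u) = 3 sqrt (1 + t^2) - 2 - sqrt (1 - t^2). The chord of the convex
  function sqrt (1 + t^2) on [0,1] and the bound sqrt (1 - t^2) \<ge> 1 - t give
  6 f*(u) \<le> (3 sqrt 2 - 2) t, which is the claim pointwise; integrate.\<close>

lemma f_SN3_star_eq_sqrt:
  assumes "0 \<le> u" "u \<le> 1"
  shows "f_SN3_star u = sqrt 2 / 2 * sqrt (u\<^sup>2 + (1 - u)\<^sup>2) - (1 + sqrt (u * (1 - u))) / 3"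
proof (cases "0 < u \<and> u < 1")
  case True
  then have u: "0 < u" "u < 1" by auto
  have "u * sqrt ((((1 - u) / u)\<^sup>2 + 1) / 2) = sqrt (u\<^sup>2 * ((((1 - u) / u)\<^sup>2 + 1) / 2))"
    using u by (simp only: real_sqrt_mult real_sqrt_abs abs_of_pos)
  also have "u\<^sup>2 * ((((1 - u) / u)\<^sup>2 + 1) / 2) = (u\<^sup>2 + (1 - u)\<^sup>2) / 2"
    using u by (simp add: field_simps power2_eq_square)
  also have "sqrt \<dots> = sqrt 2 / 2 * sqrt (u\<^sup>2 + (1 - u)\<^sup>2)"
    by (simp add: real_sqrt_divide field_simps)
  finally have A: "u * sqrt ((((1 - u) / u)\<^sup>2 + 1) / 2) = sqrt 2 / 2 * sqrt (u\<^sup>2 + (1 - u)\<^sup>2)" .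
  have "u * sqrt ((1 - u) / u) = sqrt (u\<^sup>2 * ((1 - u) / u))"
    using u by (simp only: real_sqrt_mult real_sqrt_abs abs_of_pos)
  also have "u\<^sup>2 * ((1 - u) / u) = u * (1 - u)"
    using u by (simp add: field_simps power2_eq_square)
  finally have B: "u * sqrt ((1 - u) / u) = sqrt (u * (1 - u))" .
  have "f_SN3_star u = u * sqrt ((((1 - u) / u)\<^sup>2 + 1) / 2) - ((1 - u) + u * sqrt ((1 - u) / u) + u) / 3"
    using u by (simp add: f_SN3_star_def f_SN3_def field_simps)
  then show ?thesis unfolding A B by simp
next
  case False
  then show ?thesis unfolding f_SN3_star_def by auto
qed

lemma f_SN3_star_eq_dist_half:
  assumes "0 \<le> u" "u \<le> 1"
  shows "6 * f_SN3_star u = 3 * sqrt (1 + \<bar>1 - 2 * u\<bar>\<^sup>2) - 2 - sqrt (1 - \<bar>1 - 2 * u\<bar>\<^sup>2)"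
proof -
  have "u\<^sup>2 + (1 - u)\<^sup>2 = (1 + \<bar>1 - 2 * u\<bar>\<^sup>2) / 2" "u * (1 - u) = (1 - \<bar>1 - 2 * u\<bar>\<^sup>2) / 4"
    by (simp_all add: power2_eq_square algebra_simps)
  then have sqrt_eqs: "sqrt 2 / 2 * sqrt (u\<^sup>2 + (1 - u)\<^sup>2) = sqrt (1 + \<bar>1 - 2 * u\<bar>\<^sup>2) / 2"
    "sqrt (u * (1 - u)) = sqrt (1 - \<bar>1 - 2 * u\<bar>\<^sup>2) / 2"
    by (simp_all only:) (simp_all add: real_sqrt_divide)
  then show ?thesis
    unfolding f_SN3_star_eq_sqrt[OF assms] sqrt_eqs by (simp add: algebra_simps)
qed

lemma sqrt_one_plus_square_le_chord:
  fixes t :: real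
  assumes "0 \<le> t" "t \<le> 1"
  shows "sqrt (1 + t\<^sup>2) \<le> 1 + (sqrt 2 - 1) * t"
proof (rule real_le_lsqrt)
  have "(sqrt 2 - 1) * t\<^sup>2 \<le> (sqrt 2 - 1) * t"
    using assms by (intro mult_left_mono) (auto simp: power2_eq_square mult_left_le_one_le)
  moreover have "(1 + (sqrt 2 - 1) * t)\<^sup>2 = 1 + 2 * (sqrt 2 - 1) * t + (3 - 2 * sqrt 2) * t\<^sup>2"
    by (simp add: power2_eq_square algebra_simps)
  ultimately show "1 + t\<^sup>2 \<le> (1 + (sqrt 2 - 1) * t)\<^sup>2"
    by (simp add: algebra_simps)
  show "0 \<le> 1 + (sqrt 2 - 1) * t"
    using assms by simp
qed

lemma one_minus_le_sqrt_one_minus_square: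
  fixes t :: real
  assumes "0 \<le> t" "t \<le> 1"
  shows "1 - t \<le> sqrt (1 - t\<^sup>2)"
  using assms by (intro real_le_rsqrt) (auto simp: power2_eq_square algebra_simps mult_left_mono)

lemma f_SN3_star_le_dist_half:
  assumes "0 \<le> u" "u \<le> 1"
  shows "6 / (3 * sqrt 2 - 2) * f_SN3_star u \<le> \<bar>1 - 2 * u\<bar>"
proof -
  have t: "0 \<le> \<bar>1 - 2 * u\<bar>" "\<bar>1 - 2 * u\<bar> \<le> 1"
    using assms by auto
  have "6 * f_SN3_star u \<le> (3 * sqrt 2 - 2) * \<bar>1 - 2 * u\<bar>"
    using f_SN3_star_eq_dist_half[OF assms] sqrt_one_plus_square_le_chord[OF t]
      one_minus_le_sqrt_one_minus_square[OF t]
    by (simp add: algebra_simps)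
  moreover have "1 < sqrt 2"
    by simp
  then have "0 < 3 * sqrt 2 - 2"
    by linarith
  ultimately show ?thesis
    by (simp add: divide_simps mult.commute)
qed

lemma min_posterior_le:
  assumes "0 \<le> u" "u \<le> 1"
  shows "min (1 - u) u \<le> 1 / 2 * (1 - 6 / (3 * sqrt 2 - 2) * f_SN3_star u)"
proof -
  have "min (1 - u) u = (1 - \<bar>1 - 2 * u\<bar>) / 2"
    by (simp add: min_def abs_if)
  then show ?thesis
    using f_SN3_star_le_dist_half[OF assms] by simp
qed

lemma f_SN3_star_bounded:
  assumes "0 \<le> u" "u \<le> 1"
  shows "\<bar>f_SN3_star u\<bar> \<le> 1"
proof -
  have "\<bar>1 - 2 * u\<bar>\<^sup>2 \<le> 1"
    using assms by (simp add: abs_square_le_1)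
  then have "sqrt (1 + \<bar>1 - 2 * u\<bar>\<^sup>2) \<le> 2" "1 \<le> sqrt (1 + \<bar>1 - 2 * u\<bar>\<^sup>2)"
    "sqrt (1 - \<bar>1 - 2 * u\<bar>\<^sup>2) \<le> 1" "0 \<le> sqrt (1 - \<bar>1 - 2 * u\<bar>\<^sup>2)"
    by (auto intro!: real_le_lsqrt)
  then show ?thesis
    using f_SN3_star_eq_dist_half[OF assms] by linarith
qed

theorem mainTheorem3:
  fixes M :: "'a measure" and q :: "'a \<Rightarrow> real"
  assumes "prob_space M"
    and "q \<in> borel_measurable M"
    and "\<And>x. x \<in> space M \<Longrightarrow> 0 \<le> q x \<and> q x \<le> 1"
  shows "bayes_error M q \<le> 1 / 2 * (1 - 6 / (3 * sqrt 2 - 2) * M_SN3 M q)"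
proof -
  interpret prob_space M by fact
  define c where "c = 6 / (3 * sqrt 2 - 2)"
  have "(\<lambda>x. f_SN3_star (q x)) \<in> borel_measurable M"
    unfolding f_SN3_star_def f_SN3_def using assms(2) by measurable
  then have int_f: "integrable M (\<lambda>x. f_SN3_star (q x))"
    using assms(3) f_SN3_star_bounded by (intro integrable_const_bound[where B = 1]) auto
  have int_min: "integrable M (\<lambda>x. min (1 - q x) (q x))"
    using assms(2,3) by (intro integrable_const_bound[where B = 1]) auto
  have "bayes_error M q \<le> (\<integral>x. 1 / 2 * (1 - c * f_SN3_star (q x)) \<partial>M)"
    unfolding bayes_error_def c_def
    using int_min int_f assms(3) min_posterior_le by (intro integral_mono) auto
  also have "\<dots> = 1 / 2 * (1 - c * M_SN3 M q)"
    unfolding M_SN3_def using int_f by (simp add: prob_space)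
  finally show ?thesis unfolding c_def .
qed

end
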